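(* Let $(E,\mathscr{T},\le)$ be a locally compact $T_2$-preordered Tychonoff space with $G(\le)=\bigcap_{f\in\mathcal{F}}G_f$. Then for every $\mathcal{H}\subseteq\mathcal{F}$ with $G(\le)=\bigcap_{h\in\mathcal{H}}G_h$ we have $i(i(\mathcal{H}))=i(\mathcal{H})$; and if $\mathcal{H}_1\subseteq\mathcal{H}_2\subseteq\mathcal{F}$ with $G(\le)=\bigcap_{h\in\mathcal{H}_1}G_h$, then $i(\mathcal{H}_1)\subseteq i(\mathcal{H}_2)$.
   Context: $T_2$-preordered: the graph $G(\le)=\{(x,y):x\le y\}$ is closed in $E\times E$. $\mathcal{F}$ is the family of continuous isotone functions $f:E\to[0,1]$; $G_f=\{(x,y):f(x)\le f(y)\}$. $\mathcal{C}$ is the family of continuous functions $E\to[0,1]$ constant outside a compact set. For $\mathcal{H}\subseteq\mathcal{F}$ with $G(\le)=\bigcap_{h\in\mathcal{H}}G_h$, the $\mathcal{H}$-compactification is $c:E\to[0,1]^{\mathcal{H}\cup\mathcal{C}}$, $c(x)=(g(x))_{g\in\mathcal{H}\cup\mathcal{C}}$, with $cE$ the closure of $c(E)$, induced product topology, and preorder $x\le_c y$ iff $x_h\le y_h$ for all $h\in\mathcal{H}$. $i(\mathcal{H})$ is the set of $f\in\mathcal{F}$ such that $f\circ c^{-1}:c(E)\to[0,1]$ extends to a continuous isotone function on $(cE,\le_c)$ for the $\mathcal{H}$-compactification $c$; it contains $\mathcal{H}$ and hence also represents $\le$. *)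

theory Defs
  imports "HOL-Analysis.Analysis"
begin

definition graph_rel :: "'a topology \<Rightarrow> ('a \<Rightarrow> 'a \<Rightarrow> bool) \<Rightarrow> ('a \<times> 'a) set" where
  "graph_rel X le = {(x, y). x \<in> topspace X \<and> y \<in> topspace X \<and> le x y}"

definition preorder_on :: "'a set \<Rightarrow> ('a \<Rightarrow> 'a \<Rightarrow> bool) \<Rightarrow> bool" where
  "preorder_on S le \<longleftrightarrow> (\<forall>x\<in>S. le x x) \<and>
     (\<forall>x\<in>S. \<forall>y\<in>S. \<forall>z\<in>S. le x y \<longrightarrow> le y z \<longrightarrow> le x z)"

definition T2_preordered :: "'a topology \<Rightarrow> ('a \<Rightarrow> 'a \<Rightarrow> bool) \<Rightarrow> bool" where
  "T2_preordered X le \<longleftrightarrow> preorder_on (topspace X) le \<and>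
     closedin (prod_topology X X) (graph_rel X le)"

definition isotone_on :: "'b set \<Rightarrow> ('b \<Rightarrow> 'b \<Rightarrow> bool) \<Rightarrow> ('b \<Rightarrow> real) \<Rightarrow> bool" where
  "isotone_on S le f \<longleftrightarrow> (\<forall>x\<in>S. \<forall>y\<in>S. le x y \<longrightarrow> f x \<le> f y)"

definition iso_funs :: "'a topology \<Rightarrow> ('a \<Rightarrow> 'a \<Rightarrow> bool) \<Rightarrow> ('a \<Rightarrow> real) set" where
  "iso_funs X le = {f. continuous_map X euclideanreal f \<and> f ` topspace X \<subseteq> {0..1}
                      \<and> isotone_on (topspace X) le f}"

definition cc_funs :: "'a topology \<Rightarrow> ('a \<Rightarrow> real) set" where
  "cc_funs X = {g. continuous_map X euclideanreal g \<and> g ` topspace X \<subseteq> {0..1} \<and>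
      (\<exists>K c. compactin X K \<and> (\<forall>x \<in> topspace X - K. g x = c))}"

definition represents :: "'a topology \<Rightarrow> ('a \<Rightarrow> 'a \<Rightarrow> bool) \<Rightarrow> ('a \<Rightarrow> real) set \<Rightarrow> bool" where
  "represents X le H \<longleftrightarrow> graph_rel X le =
     {(x, y). x \<in> topspace X \<and> y \<in> topspace X \<and> (\<forall>h\<in>H. h x \<le> h y)}"

text \<open>The H-compactification map c : E -> [0,1]^(H \<union> C), the ambient product space,
  the compactification cE (closure of c(E)) and its preorder.\<close>
definition cmap :: "'a topology \<Rightarrow> ('a \<Rightarrow> real) set \<Rightarrow> 'a \<Rightarrow> (('a \<Rightarrow> real) \<Rightarrow> real)" where
  "cmap X H x = restrict (\<lambda>g. g x) (H \<union> cc_funs X)"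

definition cube :: "'a topology \<Rightarrow> ('a \<Rightarrow> real) set \<Rightarrow> (('a \<Rightarrow> real) \<Rightarrow> real) topology" where
  "cube X H = product_topology (\<lambda>_. top_of_set {0..1}) (H \<union> cc_funs X)"

definition cspace :: "'a topology \<Rightarrow> ('a \<Rightarrow> real) set \<Rightarrow> (('a \<Rightarrow> real) \<Rightarrow> real) set" where
  "cspace X H = (cube X H) closure_of (cmap X H ` topspace X)"

definition cle :: "('a \<Rightarrow> real) set \<Rightarrow> (('a \<Rightarrow> real) \<Rightarrow> real) \<Rightarrow> (('a \<Rightarrow> real) \<Rightarrow> real) \<Rightarrow> bool" where
  "cle H p q \<longleftrightarrow> (\<forall>h\<in>H. p h \<le> q h)"

definition iH :: "'a topology \<Rightarrow> ('a \<Rightarrow> 'a \<Rightarrow> bool) \<Rightarrow> ('a \<Rightarrow> real) set \<Rightarrow> ('a \<Rightarrow> real) set" where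
  "iH X le H = {f \<in> iso_funs X le. \<exists>F.
      continuous_map (subtopology (cube X H) (cspace X H)) euclideanreal F \<and>
      F ` cspace X H \<subseteq> {0..1} \<and> isotone_on (cspace X H) (cle H) F \<and>
      (\<forall>x\<in>topspace X. F (cmap X H x) = f x)}"

end

theory Submission
  imports Defs
begin

text \<open>If every h in H1 extends continuously and isotonically to the H2-compactification,
  these extensions, together with the unchanged coordinates indexed by C, form a continuous
  isotone map from the H2-compactification to the H1-compactification commuting with the
  embeddings of E; it lands in the H1-compactification because it maps the image of E onto the
  image of E and continuous maps send closures into closures. Composing an extension of f
  through the H1-compactification with this map gives one through the H2-compactification,
  so i(H1) \<subseteq> i(H2). Every h in H extends by the coordinate projection, hence H \<subseteq> i(H);
  this yields monotonicity, and i(i(H)) \<subseteq> i(H) is the case H1 = i(H), H2 = H.\<close>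

definition iso_extension ::
  "'a topology \<Rightarrow> ('a \<Rightarrow> real) set \<Rightarrow> ('a \<Rightarrow> real) \<Rightarrow> ((('a \<Rightarrow> real) \<Rightarrow> real) \<Rightarrow> real) \<Rightarrow> bool" where
  "iso_extension X H f F \<longleftrightarrow>
      continuous_map (subtopology (cube X H) (cspace X H)) euclideanreal F \<and>
      F ` cspace X H \<subseteq> {0..1} \<and> isotone_on (cspace X H) (cle H) F \<and>
      (\<forall>x\<in>topspace X. F (cmap X H x) = f x)"

lemma iH_iff_iso_extension: "iH X le H = {f \<in> iso_funs X le. \<exists>F. iso_extension X H f F}"
  unfolding iH_def iso_extension_def by simp

lemma iH_subset_iso_funs: "iH X le H \<subseteq> iso_funs X le"
  unfolding iH_iff_iso_extension by blast

lemma cmap_in_cube: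
  assumes "H \<subseteq> iso_funs X le" "x \<in> topspace X"
  shows "cmap X H x \<in> topspace (cube X H)"
  using assms unfolding cube_def cmap_def iso_funs_def cc_funs_def
  by (auto simp: PiE_iff image_subset_iff subset_iff)

lemma cspace_subset_cube: "cspace X H \<subseteq> topspace (cube X H)"
  unfolding cspace_def by (rule closure_of_subset_topspace)

lemma topspace_cspace: "topspace (subtopology (cube X H) (cspace X H)) = cspace X H"
  using cspace_subset_cube by (auto simp: topspace_subtopology)

lemma continuous_map_cube_projection:
  assumes "k \<in> H \<union> cc_funs X"
  shows "continuous_map (subtopology (cube X H) (cspace X H)) (top_of_set {0..1}) (\<lambda>p. p k)"
  unfolding cube_def
  by (rule continuous_map_from_subtopology, rule continuous_map_product_projection) (use assms in auto)

lemma iso_extension_projection: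
  assumes "h \<in> H"
  shows "iso_extension X H h (\<lambda>p. p h)"
  unfolding iso_extension_def
proof (intro conjI)
  have hC: "h \<in> H \<union> cc_funs X" using assms by auto
  show "continuous_map (subtopology (cube X H) (cspace X H)) euclideanreal (\<lambda>p. p h)"
    using continuous_map_cube_projection[OF hC] continuous_map_in_subtopology by blast
  show "(\<lambda>p. p h) ` cspace X H \<subseteq> {0..1}"
    using cspace_subset_cube[of X H] hC unfolding cube_def by (auto simp: PiE_iff)
  show "isotone_on (cspace X H) (cle H) (\<lambda>p. p h)"
    using assms unfolding isotone_on_def cle_def by auto
  show "\<forall>x\<in>topspace X. cmap X H x h = h x"
    using hC unfolding cmap_def by auto
qed

lemma subset_iH:
  assumes "H \<subseteq> iso_funs X le"
  shows "H \<subseteq> iH X le H"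
  using assms iso_extension_projection unfolding iH_iff_iso_extension by blast

lemma cspace_map_from_extensions:
  assumes H2: "H2 \<subseteq> iso_funs X le"
    and G: "\<And>h. h \<in> H1 \<Longrightarrow> iso_extension X H2 h (G h)"
  obtains \<phi> where
    "continuous_map (subtopology (cube X H2) (cspace X H2)) (subtopology (cube X H1) (cspace X H1)) \<phi>"
    "\<And>p q. p \<in> cspace X H2 \<Longrightarrow> q \<in> cspace X H2 \<Longrightarrow> cle H2 p q \<Longrightarrow> cle H1 (\<phi> p) (\<phi> q)"
    "\<And>x. x \<in> topspace X \<Longrightarrow> \<phi> (cmap X H2 x) = cmap X H1 x"
proof
  let ?S2 = "subtopology (cube X H2) (cspace X H2)"
  define \<phi> where "\<phi> p = restrict (\<lambda>k. if k \<in> H1 then G k p else p k) (H1 \<union> cc_funs X)" for p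
  have "continuous_map ?S2 (cube X H1) \<phi>"
    unfolding cube_def[of X H1] continuous_map_componentwise
  proof (intro conjI ballI)
    show "\<phi> ` topspace ?S2 \<subseteq> extensional (H1 \<union> cc_funs X)"
      unfolding \<phi>_def by auto
  next
    fix k assume k: "k \<in> H1 \<union> cc_funs X"
    show "continuous_map ?S2 (top_of_set {0..1}) (\<lambda>p. \<phi> p k)"
    proof (cases "k \<in> H1")
      case True
      then have "continuous_map ?S2 (top_of_set {0..1}) (G k)"
        using G[OF True] unfolding iso_extension_def continuous_map_in_subtopology topspace_cspace
        by auto
      then show ?thesis using True k unfolding \<phi>_def by simp
    next
      case False
      then show ?thesis
        using continuous_map_cube_projection[of k H2 X] k unfolding \<phi>_def by simp
    qed
  qed
  moreover have \<phi>_cmap: "\<phi> (cmap X H2 x) = cmap X H1 x" if "x \<in> topspace X" for x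
    using G[unfolded iso_extension_def] that unfolding \<phi>_def cmap_def by auto
  moreover have "\<phi> ` cspace X H2 \<subseteq> cspace X H1"
  proof -
    have "cmap X H2 ` topspace X \<subseteq> cspace X H2"
      unfolding cspace_def by (rule closure_of_subset) (use cmap_in_cube[OF H2] in auto)
    then have "?S2 closure_of (cmap X H2 ` topspace X) = cspace X H2"
      by (simp add: closure_of_subtopology_open cspace_def inf.absorb1)
    with \<open>continuous_map ?S2 (cube X H1) \<phi>\<close>
    have "\<phi> ` cspace X H2 \<subseteq> cube X H1 closure_of (\<phi> ` cmap X H2 ` topspace X)"
      by (metis continuous_map_image_closure_subset)
    also have "\<phi> ` cmap X H2 ` topspace X = cmap X H1 ` topspace X"
      using \<phi>_cmap by (auto simp: image_image)
    finally show ?thesis unfolding cspace_def .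
  qed
  ultimately show "continuous_map ?S2 (subtopology (cube X H1) (cspace X H1)) \<phi>"
    using cspace_subset_cube[of X H2]
    by (auto simp: continuous_map_in_subtopology Int_absorb1)
  show "cle H1 (\<phi> p) (\<phi> q)" if "p \<in> cspace X H2" "q \<in> cspace X H2" "cle H2 p q" for p q
    using G that unfolding cle_def iso_extension_def isotone_on_def \<phi>_def by auto
  show "\<phi> (cmap X H2 x) = cmap X H1 x" if "x \<in> topspace X" for x
    using \<phi>_cmap that .
qed

lemma iso_extension_compose:
  assumes F: "iso_extension X H1 f F"
    and \<phi>: "continuous_map (subtopology (cube X H2) (cspace X H2)) (subtopology (cube X H1) (cspace X H1)) \<phi>"
    and \<phi>_iso: "\<And>p q. p \<in> cspace X H2 \<Longrightarrow> q \<in> cspace X H2 \<Longrightarrow> cle H2 p q \<Longrightarrow> cle H1 (\<phi> p) (\<phi> q)"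
    and \<phi>_cmap: "\<And>x. x \<in> topspace X \<Longrightarrow> \<phi> (cmap X H2 x) = cmap X H1 x"
  shows "iso_extension X H2 f (F \<circ> \<phi>)"
proof -
  have img: "\<phi> ` cspace X H2 \<subseteq> cspace X H1"
    using continuous_map_image_subset_topspace[OF \<phi>] unfolding topspace_cspace .
  show ?thesis
    unfolding iso_extension_def
    using continuous_map_compose[OF \<phi>] img \<phi>_iso \<phi>_cmap F
    unfolding iso_extension_def isotone_on_def by (auto simp: image_subset_iff)
qed

lemma iH_subset_iH_if_extensions:
  assumes "H2 \<subseteq> iso_funs X le" and "\<forall>h\<in>H1. \<exists>G. iso_extension X H2 h G"
  shows "iH X le H1 \<subseteq> iH X le H2"
proof
  fix f assume "f \<in> iH X le H1"
  then obtain F where f: "f \<in> iso_funs X le" and F: "iso_extension X H1 f F"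
    unfolding iH_iff_iso_extension by blast
  from assms(2) obtain G where "\<And>h. h \<in> H1 \<Longrightarrow> iso_extension X H2 h (G h)" by metis
  then obtain \<phi> where
    "continuous_map (subtopology (cube X H2) (cspace X H2)) (subtopology (cube X H1) (cspace X H1)) \<phi>"
    "\<And>p q. p \<in> cspace X H2 \<Longrightarrow> q \<in> cspace X H2 \<Longrightarrow> cle H2 p q \<Longrightarrow> cle H1 (\<phi> p) (\<phi> q)"
    "\<And>x. x \<in> topspace X \<Longrightarrow> \<phi> (cmap X H2 x) = cmap X H1 x"
    using cspace_map_from_extensions[OF assms(1)] by metis
  then have "iso_extension X H2 f (F \<circ> \<phi>)"
    by (rule iso_extension_compose[OF F])
  with f show "f \<in> iH X le H2" unfolding iH_iff_iso_extension by blast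
qed

lemma iH_mono:
  assumes "H1 \<subseteq> H2" "H2 \<subseteq> iso_funs X le"
  shows "iH X le H1 \<subseteq> iH X le H2"
  using iH_subset_iH_if_extensions[OF assms(2)] iso_extension_projection assms(1) by blast

lemma iH_idem:
  assumes "H \<subseteq> iso_funs X le"
  shows "iH X le (iH X le H) = iH X le H"
proof
  show "iH X le (iH X le H) \<subseteq> iH X le H"
    by (rule iH_subset_iH_if_extensions) (use assms in \<open>auto simp: iH_iff_iso_extension\<close>)
  show "iH X le H \<subseteq> iH X le (iH X le H)"
    using iH_mono[OF subset_iH[OF assms] iH_subset_iso_funs] .
qed

theorem mainTheorem15:
  fixes X :: "'a topology" and le :: "'a \<Rightarrow> 'a \<Rightarrow> bool"
  assumes "locally_compact_space X"
    and "Hausdorff_space X" and "completely_regular_space X"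
    and "T2_preordered X le"
    and "represents X le (iso_funs X le)"
  shows "(\<forall>H. H \<subseteq> iso_funs X le \<and> represents X le H \<longrightarrow> iH X le (iH X le H) = iH X le H)
       \<and> (\<forall>H1 H2. H1 \<subseteq> H2 \<and> H2 \<subseteq> iso_funs X le \<and> represents X le H1
               \<longrightarrow> iH X le H1 \<subseteq> iH X le H2)"
  using iH_idem iH_mono by blast

end
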